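(* Let $G$ be a cubical $\omega$-category with connections and $n\ge1$. Let $\Phi_n:\square G_{n-1}\to\square G_{n-1}$ be $\Phi_n=\psi_1(\psi_2\psi_1)(\psi_3\psi_2\psi_1)\cdots(\psi_{n-1}\cdots\psi_1)$, with $\psi_j$ acting on shells as described in the context. Then $x\mapsto(\partial x,\Phi_nx)$ is a bijection from $G_n$ to the pull-back $\{(z,y)\in\square G_{n-1}\times\Phi_n(G_n):\Phi_nz=\partial y\}$.
   Context: A cubical $\omega$-category with connections $G$ consists of sets $G_n$ ($n\ge0$), face maps $\partial^\alpha_i:G_n\to G_{n-1}$, degeneracies $\varepsilon_i:G_{n-1}\to G_n$, connections $\Gamma^\alpha_i:G_n\to G_{n+1}$ ($1\le i\le n$, $\alpha=\pm$) and partial compositions $\circ_j$ on $G_n$ ($1\le j\le n$, $a\circ_jb$ defined iff $\partial^+_ja=\partial^-_jb$) satisfying: $\partial^\alpha_i\partial^\beta_j=\partial^\beta_{j-1}\partial^\alpha_i$ ($i<j$), $\varepsilon_i\varepsilon_j=\varepsilon_{j+1}\varepsilon_i$ ($i\le j$), $\partial^\alpha_i\varepsilon_j=\varepsilon_{j-1}\partial^\alpha_i$ ($i<j$), $\varepsilon_j\partial^\alpha_{i-1}$ ($i>j$), $\mathrm{id}$ ($i=j$); $\Gamma^\alpha_i\Gamma^\beta_j=\Gamma^\beta_{j+1}\Gamma^\alpha_i$ ($i<j$), $\Gamma^\alpha_i\Gamma^\alpha_i=\Gamma^\alpha_{i+1}\Gamma^\alpha_i$, $\Gamma^\alpha_i\varepsilon_j=\varepsilon_{j+1}\Gamma^\alpha_i$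 ($i<j$), $\varepsilon_j\Gamma^\alpha_{i-1}$ ($i>j$), $\Gamma^\alpha_j\varepsilon_j=\varepsilon_{j+1}\varepsilon_j$, $\partial^\alpha_i\Gamma^\beta_j=\Gamma^\beta_{j-1}\partial^\alpha_i$ ($i<j$), $\Gamma^\beta_j\partial^\alpha_{i-1}$ ($i>j+1$), $\partial^\alpha_j\Gamma^\alpha_j=\partial^\alpha_{j+1}\Gamma^\alpha_j=\mathrm{id}$, $\partial^\alpha_j\Gamma^{-\alpha}_j=\partial^\alpha_{j+1}\Gamma^{-\alpha}_j=\varepsilon_j\partial^\alpha_j$; $\partial^-_j(a\circ_jb)=\partial^-_ja$, $\partial^+_j(a\circ_jb)=\partial^+_jb$, $\partial^\alpha_i(a\circ_jb)=\partial^\alpha_ia\circ_{j-1}\partial^\alpha_ib$ ($i<j$), $\partial^\alpha_ia\circ_j\partial^\alpha_ib$ ($i>j$); interchange $(a\circ_ib)\circ_j(c\circ_id)=(a\circ_jc)\circ_i(b\circ_jd)$ for $i\ne j$; $\varepsilon_i(a\circ_jb)=\varepsilon_ia\circ_{j+1}\varepsilon_ib$ ($i\le j$), $\varepsilon_ia\circ_j\varepsilon_ib$ ($i>j$); $\Gamma^\alpha_i(a\circ_jb)=\Gamma^\alpha_ia\circ_{j+1}\Gamma^\alpha_ib$ ($i<j$), $\Gamma^\alpha_ia\circ_j\Gamma^\alpha_ib$ ($i>j$); $\Gamma^+_j(a\circ_jb)=(\Gamma^+_ja\circ_j\varepsilon_ja)\circ_{j+1}(\varepsilon_{j+1}a\circ_j\Gamma^+_jb)$,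 $\Gamma^-_j(a\circ_jb)=(\Gamma^-_ja\circ_j\varepsilon_{j+1}b)\circ_{j+1}(\varepsilon_jb\circ_j\Gamma^-_jb)$; each $\circ_j$ is a category structure with identities $\varepsilon_jy$; $\Gamma^+_ix\circ_i\Gamma^-_ix=\varepsilon_{i+1}x$, $\Gamma^+_ix\circ_{i+1}\Gamma^-_ix=\varepsilon_ix$. Folding operations on $G_m$: $\psi_ix=\Gamma^+_i\partial^-_{i+1}x\circ_{i+1}x\circ_{i+1}\Gamma^-_i\partial^+_{i+1}x$ ($1\le i\le m-1$), $\Psi_r=\psi_{r-1}\cdots\psi_1$, $\Phi_n=\Psi_1\Psi_2\cdots\Psi_n$. An $n$-shell is a $2n$-tuple $z=(z^-_1,z^+_1,\dots,z^-_n,z^+_n)$ of elements of $G_{n-1}$ with $\partial^\alpha_iz^\beta_j=\partial^\beta_{j-1}z^\alpha_i$ for $i<j$; $\square G_{n-1}$ is the set of $n$-shells, and $\partial:G_n\to\square G_{n-1}$ is $\partial x=(\partial^-_1x,\partial^+_1x,\dots,\partial^-_nx,\partial^+_nx)$. For $1\le j\le n-1$ the map $\psi_j:\square G_{n-1}\to\square G_{n-1}$ sends $z$ to $w$ with $w^\alpha_i=\psi_{j-1}z^\alpha_i$ ($i<j$), $w^-_j=z^-_j\circ_jz^+_{j+1}$, $w^+_j=z^-_{j+1}\circ_jz^+_j$, $w^\alpha_{j+1}=\varepsilon_j\partial^\alpha_jz^\alpha_{j+1}$, $w^\alpha_i=\psi_jz^\alpha_i$ ($i>j+1$); this is a well-defined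 map of shells satisfying $\psi_j\partial=\partial\psi_j$. *)

theory Defs
  imports Main
begin

text \<open>Elements of all dimensions live in one type 'a; the set of
 n-cubes is G n. All structure maps are indexed by the dimension of their
 (first) argument. Signs: False = minus, True = plus.
  d n i \<alpha> x  : face  \<partial>^\<alpha>_i : G n \<rightarrow> G (n-1),      1 \<le> i \<le> n
  e n i x    : degeneracy \<epsilon>_i : G n \<rightarrow> G (n+1),  1 \<le> i \<le> n+1
  gm n i \<alpha> x : connection \<Gamma>^\<alpha>_i : G n \<rightarrow> G (n+1), 1 \<le> i \<le> n
  cp n j a b : a \<circ>_j b in G n (1 \<le> j \<le> n), defined iff d n j True a = d n j False b\<close>

locale cubical_conn =
  fixes G :: "nat \<Rightarrow> 'a set"
    and d :: "nat \<Rightarrow> nat \<Rightarrow> bool \<Rightarrow> 'a \<Rightarrow> 'a"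
    and e :: "nat \<Rightarrow> nat \<Rightarrow> 'a \<Rightarrow> 'a"
    and gm :: "nat \<Rightarrow> nat \<Rightarrow> bool \<Rightarrow> 'a \<Rightarrow> 'a"
    and cp :: "nat \<Rightarrow> nat \<Rightarrow> 'a \<Rightarrow> 'a \<Rightarrow> 'a"
  assumes d_closed: "\<And>n i \<alpha> x. x \<in> G n \<Longrightarrow> 1 \<le> i \<Longrightarrow> i \<le> n \<Longrightarrow> d n i \<alpha> x \<in> G (n - 1)"
    and e_closed: "\<And>n i x. x \<in> G n \<Longrightarrow> 1 \<le> i \<Longrightarrow> i \<le> Suc n \<Longrightarrow> e n i x \<in> G (Suc n)"
    and gm_closed: "\<And>n i \<alpha> x. x \<in> G n \<Longrightarrow> 1 \<le> i \<Longrightarrow> i \<le> n \<Longrightarrow> gm n i \<alpha> x \<in> G (Suc n)"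
    and cp_closed: "\<And>n j a b. a \<in> G n \<Longrightarrow> b \<in> G n \<Longrightarrow> 1 \<le> j \<Longrightarrow> j \<le> n \<Longrightarrow>
         d n j True a = d n j False b \<Longrightarrow> cp n j a b \<in> G n"
    and dd: "\<And>n i j \<alpha> \<beta> x. x \<in> G n \<Longrightarrow> 1 \<le> i \<Longrightarrow> i < j \<Longrightarrow> j \<le> n \<Longrightarrow>
         d (n - 1) i \<alpha> (d n j \<beta> x) = d (n - 1) (j - 1) \<beta> (d n i \<alpha> x)"
    and ee: "\<And>m i j x. x \<in> G m \<Longrightarrow> 1 \<le> i \<Longrightarrow> i \<le> j \<Longrightarrow> j \<le> Suc m \<Longrightarrow>
         e (Suc m) i (e m j x) = e (Suc m) (Suc j) (e m i x)"
    and de_lt: "\<And>m i j \<alpha> x. x \<in> G m \<Longrightarrow> 1 \<le> i \<Longrightarrow> i < j \<Longrightarrow> j \<le> Suc m \<Longrightarrow>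
         d (Suc m) i \<alpha> (e m j x) = e (m - 1) (j - 1) (d m i \<alpha> x)"
    and de_gt: "\<And>m i j \<alpha> x. x \<in> G m \<Longrightarrow> 1 \<le> j \<Longrightarrow> j < i \<Longrightarrow> i \<le> Suc m \<Longrightarrow>
         d (Suc m) i \<alpha> (e m j x) = e (m - 1) j (d m (i - 1) \<alpha> x)"
    and de_eq: "\<And>m j \<alpha> x. x \<in> G m \<Longrightarrow> 1 \<le> j \<Longrightarrow> j \<le> Suc m \<Longrightarrow>
         d (Suc m) j \<alpha> (e m j x) = x"
    and gg_lt: "\<And>n i j \<alpha> \<beta> x. x \<in> G n \<Longrightarrow> 1 \<le> i \<Longrightarrow> i < j \<Longrightarrow> j \<le> n \<Longrightarrow>
         gm (Suc n) i \<alpha> (gm n j \<beta> x) = gm (Suc n) (Suc j) \<beta> (gm n i \<alpha> x)"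
    and gg_eq: "\<And>n i \<alpha> x. x \<in> G n \<Longrightarrow> 1 \<le> i \<Longrightarrow> i \<le> n \<Longrightarrow>
         gm (Suc n) i \<alpha> (gm n i \<alpha> x) = gm (Suc n) (Suc i) \<alpha> (gm n i \<alpha> x)"
    and ge_lt: "\<And>m i j \<alpha> x. x \<in> G m \<Longrightarrow> 1 \<le> i \<Longrightarrow> i < j \<Longrightarrow> j \<le> Suc m \<Longrightarrow>
         gm (Suc m) i \<alpha> (e m j x) = e (Suc m) (Suc j) (gm m i \<alpha> x)"
    and ge_gt: "\<And>m i j \<alpha> x. x \<in> G m \<Longrightarrow> 1 \<le> j \<Longrightarrow> j < i \<Longrightarrow> i \<le> Suc m \<Longrightarrow>
         gm (Suc m) i \<alpha> (e m j x) = e (Suc m) j (gm m (i - 1) \<alpha> x)"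
    and ge_eq: "\<And>m j \<alpha> x. x \<in> G m \<Longrightarrow> 1 \<le> j \<Longrightarrow> j \<le> Suc m \<Longrightarrow>
         gm (Suc m) j \<alpha> (e m j x) = e (Suc m) (Suc j) (e m j x)"
    and dg_lt: "\<And>n i j \<alpha> \<beta> x. x \<in> G n \<Longrightarrow> 1 \<le> i \<Longrightarrow> i < j \<Longrightarrow> j \<le> n \<Longrightarrow>
         d (Suc n) i \<alpha> (gm n j \<beta> x) = gm (n - 1) (j - 1) \<beta> (d n i \<alpha> x)"
    and dg_gt: "\<And>n i j \<alpha> \<beta> x. x \<in> G n \<Longrightarrow> 1 \<le> j \<Longrightarrow> Suc j < i \<Longrightarrow> i \<le> Suc n \<Longrightarrow>
         d (Suc n) i \<alpha> (gm n j \<beta> x) = gm (n - 1) j \<beta> (d n (i - 1) \<alpha> x)"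
    and dg_same1: "\<And>n j \<alpha> x. x \<in> G n \<Longrightarrow> 1 \<le> j \<Longrightarrow> j \<le> n \<Longrightarrow>
         d (Suc n) j \<alpha> (gm n j \<alpha> x) = x"
    and dg_same2: "\<And>n j \<alpha> x. x \<in> G n \<Longrightarrow> 1 \<le> j \<Longrightarrow> j \<le> n \<Longrightarrow>
         d (Suc n) (Suc j) \<alpha> (gm n j \<alpha> x) = x"
    and dg_opp1: "\<And>n j \<alpha> x. x \<in> G n \<Longrightarrow> 1 \<le> j \<Longrightarrow> j \<le> n \<Longrightarrow>
         d (Suc n) j \<alpha> (gm n j (\<not> \<alpha>) x) = e (n - 1) j (d n j \<alpha> x)"
    and dg_opp2: "\<And>n j \<alpha> x. x \<in> G n \<Longrightarrow> 1 \<le> j \<Longrightarrow> j \<le> n \<Longrightarrow>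
         d (Suc n) (Suc j) \<alpha> (gm n j (\<not> \<alpha>) x) = e (n - 1) j (d n j \<alpha> x)"
    and d_cp_minus: "\<And>n j a b. a \<in> G n \<Longrightarrow> b \<in> G n \<Longrightarrow> 1 \<le> j \<Longrightarrow> j \<le> n \<Longrightarrow>
         d n j True a = d n j False b \<Longrightarrow> d n j False (cp n j a b) = d n j False a"
    and d_cp_plus: "\<And>n j a b. a \<in> G n \<Longrightarrow> b \<in> G n \<Longrightarrow> 1 \<le> j \<Longrightarrow> j \<le> n \<Longrightarrow>
         d n j True a = d n j False b \<Longrightarrow> d n j True (cp n j a b) = d n j True b"
    and d_cp_lt: "\<And>n i j \<alpha> a b. a \<in> G n \<Longrightarrow> b \<in> G n \<Longrightarrow> 1 \<le> i \<Longrightarrow> i < j \<Longrightarrow> j \<le> n \<Longrightarrow>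
         d n j True a = d n j False b \<Longrightarrow>
         d n i \<alpha> (cp n j a b) = cp (n - 1) (j - 1) (d n i \<alpha> a) (d n i \<alpha> b)"
    and d_cp_gt: "\<And>n i j \<alpha> a b. a \<in> G n \<Longrightarrow> b \<in> G n \<Longrightarrow> 1 \<le> j \<Longrightarrow> j < i \<Longrightarrow> i \<le> n \<Longrightarrow>
         d n j True a = d n j False b \<Longrightarrow>
         d n i \<alpha> (cp n j a b) = cp (n - 1) j (d n i \<alpha> a) (d n i \<alpha> b)"
    and interchange: "\<And>n i j a b c x. a \<in> G n \<Longrightarrow> b \<in> G n \<Longrightarrow> c \<in> G n \<Longrightarrow> x \<in> G n \<Longrightarrow>
         1 \<le> i \<Longrightarrow> i \<le> n \<Longrightarrow> 1 \<le> j \<Longrightarrow> j \<le> n \<Longrightarrow> i \<noteq> j \<Longrightarrow>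
         d n i True a = d n i False b \<Longrightarrow> d n i True c = d n i False x \<Longrightarrow>
         d n j True a = d n j False c \<Longrightarrow> d n j True b = d n j False x \<Longrightarrow>
         cp n j (cp n i a b) (cp n i c x) = cp n i (cp n j a c) (cp n j b x)"
    and e_cp_le: "\<And>n i j a b. a \<in> G n \<Longrightarrow> b \<in> G n \<Longrightarrow> 1 \<le> i \<Longrightarrow> i \<le> j \<Longrightarrow> j \<le> n \<Longrightarrow>
         d n j True a = d n j False b \<Longrightarrow>
         e n i (cp n j a b) = cp (Suc n) (Suc j) (e n i a) (e n i b)"
    and e_cp_gt: "\<And>n i j a b. a \<in> G n \<Longrightarrow> b \<in> G n \<Longrightarrow> 1 \<le> j \<Longrightarrow> j < i \<Longrightarrow> i \<le> Suc n \<Longrightarrow>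
         d n j True a = d n j False b \<Longrightarrow>
         e n i (cp n j a b) = cp (Suc n) j (e n i a) (e n i b)"
    and g_cp_lt: "\<And>n i j \<alpha> a b. a \<in> G n \<Longrightarrow> b \<in> G n \<Longrightarrow> 1 \<le> i \<Longrightarrow> i < j \<Longrightarrow> j \<le> n \<Longrightarrow>
         d n j True a = d n j False b \<Longrightarrow>
         gm n i \<alpha> (cp n j a b) = cp (Suc n) (Suc j) (gm n i \<alpha> a) (gm n i \<alpha> b)"
    and g_cp_gt: "\<And>n i j \<alpha> a b. a \<in> G n \<Longrightarrow> b \<in> G n \<Longrightarrow> 1 \<le> j \<Longrightarrow> j < i \<Longrightarrow> i \<le> n \<Longrightarrow>
         d n j True a = d n j False b \<Longrightarrow>
         gm n i \<alpha> (cp n j a b) = cp (Suc n) j (gm n i \<alpha> a) (gm n i \<alpha> b)"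
    and g_cp_plus: "\<And>n j a b. a \<in> G n \<Longrightarrow> b \<in> G n \<Longrightarrow> 1 \<le> j \<Longrightarrow> j \<le> n \<Longrightarrow>
         d n j True a = d n j False b \<Longrightarrow>
         gm n j True (cp n j a b) =
           cp (Suc n) (Suc j) (cp (Suc n) j (gm n j True a) (e n j a))
                              (cp (Suc n) j (e n (Suc j) a) (gm n j True b))"
    and g_cp_minus: "\<And>n j a b. a \<in> G n \<Longrightarrow> b \<in> G n \<Longrightarrow> 1 \<le> j \<Longrightarrow> j \<le> n \<Longrightarrow>
         d n j True a = d n j False b \<Longrightarrow>
         gm n j False (cp n j a b) =
           cp (Suc n) (Suc j) (cp (Suc n) j (gm n j False a) (e n (Suc j) b))
                              (cp (Suc n) j (e n j b) (gm n j False b))"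
    and cp_assoc: "\<And>n j a b c. a \<in> G n \<Longrightarrow> b \<in> G n \<Longrightarrow> c \<in> G n \<Longrightarrow> 1 \<le> j \<Longrightarrow> j \<le> n \<Longrightarrow>
         d n j True a = d n j False b \<Longrightarrow> d n j True b = d n j False c \<Longrightarrow>
         cp n j (cp n j a b) c = cp n j a (cp n j b c)"
    and cp_left_id: "\<And>n j a. a \<in> G n \<Longrightarrow> 1 \<le> j \<Longrightarrow> j \<le> n \<Longrightarrow>
         cp n j (e (n - 1) j (d n j False a)) a = a"
    and cp_right_id: "\<And>n j a. a \<in> G n \<Longrightarrow> 1 \<le> j \<Longrightarrow> j \<le> n \<Longrightarrow>
         cp n j a (e (n - 1) j (d n j True a)) = a"
    and conn_inv1: "\<And>n i x. x \<in> G n \<Longrightarrow> 1 \<le> i \<Longrightarrow> i \<le> n \<Longrightarrow>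
         cp (Suc n) i (gm n i True x) (gm n i False x) = e n (Suc i) x"
    and conn_inv2: "\<And>n i x. x \<in> G n \<Longrightarrow> 1 \<le> i \<Longrightarrow> i \<le> n \<Longrightarrow>
         cp (Suc n) (Suc i) (gm n i True x) (gm n i False x) = e n i x"

definition psi :: "(nat \<Rightarrow> nat \<Rightarrow> bool \<Rightarrow> 'a \<Rightarrow> 'a) \<Rightarrow> (nat \<Rightarrow> nat \<Rightarrow> bool \<Rightarrow> 'a \<Rightarrow> 'a)
    \<Rightarrow> (nat \<Rightarrow> nat \<Rightarrow> 'a \<Rightarrow> 'a \<Rightarrow> 'a) \<Rightarrow> nat \<Rightarrow> nat \<Rightarrow> 'a \<Rightarrow> 'a" where
  "psi d gm cp m i x =
     cp m (Suc i) (cp m (Suc i) (gm (m - 1) i True (d m (Suc i) False x)) x)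
                  (gm (m - 1) i False (d m (Suc i) True x))"

text \<open>Generic composites: Psi_gen f r = f (r-1) o ... o f 1 (f 1 applied first);
 Phi_gen f n = Psi_1 o Psi_2 o ... o Psi_n (Psi_n applied first).\<close>
definition Psi_gen :: "(nat \<Rightarrow> 'b \<Rightarrow> 'b) \<Rightarrow> nat \<Rightarrow> 'b \<Rightarrow> 'b" where
  "Psi_gen f r = fold f [1..<r]"

definition Phi_gen :: "(nat \<Rightarrow> 'b \<Rightarrow> 'b) \<Rightarrow> nat \<Rightarrow> 'b \<Rightarrow> 'b" where
  "Phi_gen f n = fold (Psi_gen f) (rev [1..<Suc n])"

text \<open>Shells: an n-shell (z^-_1, z^+_1, ..., z^-_n, z^+_n) is represented as the list
 [(z^-_1, z^+_1), ..., (z^-_n, z^+_n)].\<close>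
definition sh :: "('a \<times> 'a) list \<Rightarrow> nat \<Rightarrow> bool \<Rightarrow> 'a" where
  "sh z i \<alpha> = (if \<alpha> then snd (z ! (i - 1)) else fst (z ! (i - 1)))"

definition shells :: "(nat \<Rightarrow> 'a set) \<Rightarrow> (nat \<Rightarrow> nat \<Rightarrow> bool \<Rightarrow> 'a \<Rightarrow> 'a) \<Rightarrow> nat
    \<Rightarrow> ('a \<times> 'a) list set" where
  "shells G d n = {z. length z = n \<and>
      (\<forall>i \<alpha>. 1 \<le> i \<and> i \<le> n \<longrightarrow> sh z i \<alpha> \<in> G (n - 1)) \<and>
      (\<forall>i j \<alpha> \<beta>. 1 \<le> i \<and> i < j \<and> j \<le> n \<longrightarrow>
          d (n - 1) i \<alpha> (sh z j \<beta>) = d (n - 1) (j - 1) \<beta> (sh z i \<alpha>))}"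

definition bd :: "(nat \<Rightarrow> nat \<Rightarrow> bool \<Rightarrow> 'a \<Rightarrow> 'a) \<Rightarrow> nat \<Rightarrow> 'a \<Rightarrow> ('a \<times> 'a) list" where
  "bd d n x = map (\<lambda>i. (d n i False x, d n i True x)) [1..<Suc n]"

definition psi_sh :: "(nat \<Rightarrow> nat \<Rightarrow> bool \<Rightarrow> 'a \<Rightarrow> 'a) \<Rightarrow> (nat \<Rightarrow> nat \<Rightarrow> 'a \<Rightarrow> 'a)
    \<Rightarrow> (nat \<Rightarrow> nat \<Rightarrow> bool \<Rightarrow> 'a \<Rightarrow> 'a) \<Rightarrow> (nat \<Rightarrow> nat \<Rightarrow> 'a \<Rightarrow> 'a \<Rightarrow> 'a)
    \<Rightarrow> nat \<Rightarrow> nat \<Rightarrow> ('a \<times> 'a) list \<Rightarrow> ('a \<times> 'a) list" where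
  "psi_sh d e gm cp n j z =
     (let w = (\<lambda>i \<alpha>.
         if i < j then psi d gm cp (n - 1) (j - 1) (sh z i \<alpha>)
         else if i = j then
           (if \<alpha> then cp (n - 1) j (sh z (Suc j) False) (sh z j True)
            else cp (n - 1) j (sh z j False) (sh z (Suc j) True))
         else if i = Suc j then e (n - 2) j (d (n - 1) j \<alpha> (sh z (Suc j) \<alpha>))
         else psi d gm cp (n - 1) j (sh z i \<alpha>))
      in map (\<lambda>i. (w i False, w i True)) [1..<Suc n])"

definition Phi :: "(nat \<Rightarrow> nat \<Rightarrow> bool \<Rightarrow> 'a \<Rightarrow> 'a) \<Rightarrow> (nat \<Rightarrow> nat \<Rightarrow> bool \<Rightarrow> 'a \<Rightarrow> 'a)
    \<Rightarrow> (nat \<Rightarrow> nat \<Rightarrow> 'a \<Rightarrow> 'a \<Rightarrow> 'a) \<Rightarrow> nat \<Rightarrow> 'a \<Rightarrow> 'a" where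
  "Phi d gm cp n = Phi_gen (psi d gm cp n) n"

definition Phi_sh :: "(nat \<Rightarrow> nat \<Rightarrow> bool \<Rightarrow> 'a \<Rightarrow> 'a) \<Rightarrow> (nat \<Rightarrow> nat \<Rightarrow> 'a \<Rightarrow> 'a)
    \<Rightarrow> (nat \<Rightarrow> nat \<Rightarrow> bool \<Rightarrow> 'a \<Rightarrow> 'a) \<Rightarrow> (nat \<Rightarrow> nat \<Rightarrow> 'a \<Rightarrow> 'a \<Rightarrow> 'a)
    \<Rightarrow> nat \<Rightarrow> ('a \<times> 'a) list \<Rightarrow> ('a \<times> 'a) list" where
  "Phi_sh d e gm cp n = Phi_gen (psi_sh d e gm cp n) n"

end

theory Submission imports Defs begin

text \<open>Each folding \<psi>_j can be undone relative to the boundary. With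
  l = \<partial>^-_j x, r = \<partial>^+_j x, a = \<partial>^-_{j+1} x, b = \<partial>^+_{j+1} x one has
  x = (\<epsilon>_j l \<circ>_{j+1} \<Gamma>^+_j b) \<circ>_j \<psi>_j x \<circ>_j (\<Gamma>^-_j a \<circ>_{j+1} \<epsilon>_j r),
  and conversely, whenever z is a shell and \<psi>_j z = \<partial> y, the same composite built
  from the faces of z and from y is a cube with boundary z and \<psi>_j-image y. So
  x \<mapsto> (\<partial> x, \<psi>_j x) is a bijection onto such pairs (z, y). Since \<psi>_j commutes
  with \<partial> and maps shells to shells, these bijections compose along the word \<Phi>_n
  in the foldings.\<close>

lemma sh_map_upt:
  "1 \<le> i \<Longrightarrow> i \<le> n \<Longrightarrow> sh (map (\<lambda>i. (w i False, w i True)) [1..<Suc n]) i \<alpha> = w i \<alpha>"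
proof -
  assume "1 \<le> i" "i \<le> n"
  then have "i - 1 < length [1..<Suc n]" "[1..<Suc n] ! (i - 1) = i" by (simp_all del: upt_Suc)
  then show ?thesis by (simp add: sh_def)
qed

lemma sh_bd: "1 \<le> i \<Longrightarrow> i \<le> n \<Longrightarrow> sh (bd d n x) i \<alpha> = d n i \<alpha> x"
  unfolding bd_def by (rule sh_map_upt)

lemma length_bd [simp]: "length (bd d n x) = n"
  by (simp add: bd_def)

lemma length_psi_sh [simp]: "length (psi_sh d e gm cp n j z) = n"
  by (simp add: psi_sh_def Let_def)

lemma shell_list_eqI:
  assumes "length z = n" "length z' = n"
    and "\<And>i \<alpha>. 1 \<le> i \<Longrightarrow> i \<le> n \<Longrightarrow> sh z i \<alpha> = sh z' i \<alpha>"
  shows "z = z'"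
proof (rule nth_equalityI)
  show "length z = length z'" using assms by simp
  fix k assume "k < length z"
  then have "sh z (Suc k) \<alpha> = sh z' (Suc k) \<alpha>" for \<alpha>
    using assms by auto
  from this[of False] this[of True] show "z ! k = z' ! k"
    by (simp add: sh_def prod_eq_iff)
qed

lemma sh_psi_sh:
  "1 \<le> i \<Longrightarrow> i \<le> n \<Longrightarrow> sh (psi_sh d e gm cp n j z) i \<alpha> =
    (if i < j then psi d gm cp (n - 1) (j - 1) (sh z i \<alpha>)
     else if i = j then (if \<alpha> then cp (n - 1) j (sh z (Suc j) False) (sh z j True)
                         else cp (n - 1) j (sh z j False) (sh z (Suc j) True))
     else if i = Suc j then e (n - 2) j (d (n - 1) j \<alpha> (sh z (Suc j) \<alpha>))
     else psi d gm cp (n - 1) j (sh z i \<alpha>))"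
  unfolding psi_sh_def Let_def by (subst sh_map_upt) auto

definition Phi_word :: "nat \<Rightarrow> nat list" where
  "Phi_word n = concat (map (\<lambda>r. [1..<r]) (rev [1..<Suc n]))"

lemma Phi_gen_eq_fold: "Phi_gen f n = fold f (Phi_word n)"
proof -
  have "fold (Psi_gen f) rs = fold f (concat (map (\<lambda>r. [1..<r]) rs))" for rs
    by (induction rs) (simp_all add: Psi_gen_def del: upt_Suc)
  then show ?thesis unfolding Phi_gen_def Phi_word_def .
qed

lemma set_Phi_word: "set (Phi_word (Suc m)) \<subseteq> {1..m}"
  by (auto simp: Phi_word_def simp del: upt_Suc)

context cubical_conn
begin

lemma d_closed_Suc: "x \<in> G (Suc m) \<Longrightarrow> 1 \<le> i \<Longrightarrow> i \<le> Suc m \<Longrightarrow> d (Suc m) i \<alpha> x \<in> G m"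
  using d_closed[of x "Suc m" i \<alpha>] by simp

lemma dg_opp1_minus:
  "x \<in> G m \<Longrightarrow> 1 \<le> j \<Longrightarrow> j \<le> m \<Longrightarrow> d (Suc m) j False (gm m j True x) = e (m - 1) j (d m j False x)"
  using dg_opp1[of x m j False] by simp

lemma dg_opp1_plus:
  "x \<in> G m \<Longrightarrow> 1 \<le> j \<Longrightarrow> j \<le> m \<Longrightarrow> d (Suc m) j True (gm m j False x) = e (m - 1) j (d m j True x)"
  using dg_opp1[of x m j True] by simp

lemma dg_opp2_minus:
  "x \<in> G m \<Longrightarrow> 1 \<le> j \<Longrightarrow> j \<le> m \<Longrightarrow> d (Suc m) (Suc j) False (gm m j True x) = e (m - 1) j (d m j False x)"
  using dg_opp2[of x m j False] by simp

lemma dg_opp2_plus: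
  "x \<in> G m \<Longrightarrow> 1 \<le> j \<Longrightarrow> j \<le> m \<Longrightarrow> d (Suc m) (Suc j) True (gm m j False x) = e (m - 1) j (d m j True x)"
  using dg_opp2[of x m j True] by simp

context
  fixes x m j
  assumes x: "x \<in> G (Suc m)" and j1: "1 \<le> j" and jm: "j \<le> m"
begin

abbreviation "psi_half \<equiv> cp (Suc m) (Suc j) (gm m j True (d (Suc m) (Suc j) False x)) x"

lemma adjacent_faces_closed: "d (Suc m) j \<alpha> x \<in> G m" "d (Suc m) (Suc j) \<alpha> x \<in> G m"
  using d_closed_Suc[OF x] j1 jm by simp_all

lemma gm_face_closed: "gm m j \<beta> (d (Suc m) (Suc j) \<alpha> x) \<in> G (Suc m)"
  using gm_closed[OF adjacent_faces_closed(2) j1 jm] .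

lemma dd_adjacent:
  "d m j True (d (Suc m) j False x) = d m j False (d (Suc m) (Suc j) True x)"
  "d m j True (d (Suc m) (Suc j) False x) = d m j False (d (Suc m) j True x)"
  "d m j False (d (Suc m) j False x) = d m j False (d (Suc m) (Suc j) False x)"
  "d m j True (d (Suc m) j True x) = d m j True (d (Suc m) (Suc j) True x)"
  using dd[OF x j1, of "Suc j"] jm by simp_all

lemma psi_half_composable:
  "d (Suc m) (Suc j) True (gm m j True (d (Suc m) (Suc j) False x)) = d (Suc m) (Suc j) False x"
  using dg_same2[OF adjacent_faces_closed(2) j1 jm] .

lemma psi_half_closed: "psi_half \<in> G (Suc m)"
  by (rule cp_closed[OF gm_face_closed[of True False] x]) (use jm psi_half_composable in auto)

lemma d_psi_half:
  "d (Suc m) j False psi_half = d (Suc m) j False x"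
  "d (Suc m) j True psi_half = cp m j (d (Suc m) (Suc j) False x) (d (Suc m) j True x)"
  "d (Suc m) (Suc j) False psi_half = e (m - 1) j (d m j False (d (Suc m) (Suc j) False x))"
  "d (Suc m) (Suc j) True psi_half = d (Suc m) (Suc j) True x"
proof -
  have "d (Suc m) j False psi_half
      = cp m j (e (m - 1) j (d m j False (d (Suc m) j False x))) (d (Suc m) j False x)"
    using d_cp_lt[OF gm_face_closed[of True False] x j1, of "Suc j" False] jm psi_half_composable
      dg_opp1_minus[OF adjacent_faces_closed(2) j1 jm] dd_adjacent(3) by simp
  also have "\<dots> = d (Suc m) j False x"
    using cp_left_id[OF adjacent_faces_closed(1) j1 jm] by simp
  finally show "d (Suc m) j False psi_half = d (Suc m) j False x" .
  show "d (Suc m) j True psi_half = cp m j (d (Suc m) (Suc j) False x) (d (Suc m) j True x)"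
    using d_cp_lt[OF gm_face_closed[of True False] x j1, of "Suc j" True] jm psi_half_composable
      dg_same1[OF adjacent_faces_closed(2) j1 jm] by simp
  show "d (Suc m) (Suc j) False psi_half = e (m - 1) j (d m j False (d (Suc m) (Suc j) False x))"
    using d_cp_minus[OF gm_face_closed[of True False] x, of "Suc j"] jm psi_half_composable
      dg_opp2_minus[OF adjacent_faces_closed(2) j1 jm] by simp
  show "d (Suc m) (Suc j) True psi_half = d (Suc m) (Suc j) True x"
    using d_cp_plus[OF gm_face_closed[of True False] x, of "Suc j"] jm psi_half_composable by simp
qed

lemma psi_composable:
  "d (Suc m) (Suc j) True psi_half = d (Suc m) (Suc j) False (gm m j False (d (Suc m) (Suc j) True x))"
  using d_psi_half(4) dg_same2[OF adjacent_faces_closed(2) j1 jm] by simp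

lemma psi_closed: "psi d gm cp (Suc m) j x \<in> G (Suc m)"
  unfolding psi_def
  by simp (rule cp_closed[OF psi_half_closed gm_face_closed[of False True]], use jm psi_composable in auto)

lemma d_psi_adjacent:
  "d (Suc m) j False (psi d gm cp (Suc m) j x) = cp m j (d (Suc m) j False x) (d (Suc m) (Suc j) True x)"
  "d (Suc m) j True (psi d gm cp (Suc m) j x) = cp m j (d (Suc m) (Suc j) False x) (d (Suc m) j True x)"
  "d (Suc m) (Suc j) False (psi d gm cp (Suc m) j x) = e (m - 1) j (d m j False (d (Suc m) (Suc j) False x))"
  "d (Suc m) (Suc j) True (psi d gm cp (Suc m) j x) = e (m - 1) j (d m j True (d (Suc m) (Suc j) True x))"
proof -
  note d_psi_lt = d_cp_lt[OF psi_half_closed gm_face_closed[of False True] j1, of "Suc j"]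
  show "d (Suc m) j False (psi d gm cp (Suc m) j x) = cp m j (d (Suc m) j False x) (d (Suc m) (Suc j) True x)"
    unfolding psi_def using d_psi_lt[of False] jm psi_composable d_psi_half(1)
      dg_same1[OF adjacent_faces_closed(2) j1 jm] by simp
  have "d (Suc m) j True (psi d gm cp (Suc m) j x)
      = cp m j (cp m j (d (Suc m) (Suc j) False x) (d (Suc m) j True x))
               (e (m - 1) j (d m j True (d (Suc m) (Suc j) True x)))"
    unfolding psi_def using d_psi_lt[of True] jm psi_composable d_psi_half(2)
      dg_opp1_plus[OF adjacent_faces_closed(2) j1 jm] by simp
  also have "\<dots> = cp m j (d (Suc m) (Suc j) False x) (d (Suc m) j True x)"
    using cp_right_id[OF cp_closed[OF adjacent_faces_closed(2,1) j1 jm dd_adjacent(2)] j1 jm]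
      d_cp_plus[OF adjacent_faces_closed(2,1) j1 jm dd_adjacent(2)] dd_adjacent(4) by simp
  finally show "d (Suc m) j True (psi d gm cp (Suc m) j x)
      = cp m j (d (Suc m) (Suc j) False x) (d (Suc m) j True x)" .
  show "d (Suc m) (Suc j) False (psi d gm cp (Suc m) j x) = e (m - 1) j (d m j False (d (Suc m) (Suc j) False x))"
    unfolding psi_def using d_cp_minus[OF psi_half_closed gm_face_closed[of False True], of "Suc j"] jm psi_composable d_psi_half(3)
    by simp
  show "d (Suc m) (Suc j) True (psi d gm cp (Suc m) j x) = e (m - 1) j (d m j True (d (Suc m) (Suc j) True x))"
    unfolding psi_def using d_cp_plus[OF psi_half_closed gm_face_closed[of False True], of "Suc j"] jm psi_composable
      dg_opp2_plus[OF adjacent_faces_closed(2) j1 jm] by simp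
qed

lemma d_psi_below:
  assumes "1 \<le> i" "i < j"
  shows "d (Suc m) i \<alpha> (psi d gm cp (Suc m) j x) = psi d gm cp m (j - 1) (d (Suc m) i \<alpha> x)"
proof -
  have "d (Suc m) i \<alpha> (psi d gm cp (Suc m) j x) =
     cp m j (cp m j (d (Suc m) i \<alpha> (gm m j True (d (Suc m) (Suc j) False x))) (d (Suc m) i \<alpha> x))
            (d (Suc m) i \<alpha> (gm m j False (d (Suc m) (Suc j) True x)))"
    unfolding psi_def
    using d_cp_lt[OF psi_half_closed gm_face_closed[of False True] assms(1), of "Suc j" \<alpha>]
      d_cp_lt[OF gm_face_closed[of True False] x assms(1), of "Suc j" \<alpha>] jm psi_composable psi_half_composable assms
    by simp
  also have "\<dots> = cp m j (cp m j (gm (m - 1) (j - 1) True (d m i \<alpha> (d (Suc m) (Suc j) False x))) (d (Suc m) i \<alpha> x))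
            (gm (m - 1) (j - 1) False (d m i \<alpha> (d (Suc m) (Suc j) True x)))"
    using dg_lt[OF adjacent_faces_closed(2) assms(1)] assms jm by simp
  also have "\<dots> = psi d gm cp m (j - 1) (d (Suc m) i \<alpha> x)"
    unfolding psi_def using dd[OF x assms(1), of "Suc j"] assms jm by simp
  finally show ?thesis .
qed

lemma d_psi_above:
  assumes "Suc j < i" "i \<le> Suc m"
  shows "d (Suc m) i \<alpha> (psi d gm cp (Suc m) j x) = psi d gm cp m j (d (Suc m) i \<alpha> x)"
proof -
  have "d (Suc m) i \<alpha> (psi d gm cp (Suc m) j x) =
     cp m (Suc j) (cp m (Suc j) (d (Suc m) i \<alpha> (gm m j True (d (Suc m) (Suc j) False x))) (d (Suc m) i \<alpha> x))
            (d (Suc m) i \<alpha> (gm m j False (d (Suc m) (Suc j) True x)))"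
    unfolding psi_def
    using d_cp_gt[OF psi_half_closed gm_face_closed[of False True], of "Suc j" i \<alpha>]
      d_cp_gt[OF gm_face_closed[of True False] x, of "Suc j" i \<alpha>] jm psi_composable psi_half_composable assms
    by simp
  also have "\<dots> = cp m (Suc j) (cp m (Suc j) (gm (m - 1) j True (d m (i - 1) \<alpha> (d (Suc m) (Suc j) False x))) (d (Suc m) i \<alpha> x))
            (gm (m - 1) j False (d m (i - 1) \<alpha> (d (Suc m) (Suc j) True x)))"
    using dg_gt[OF adjacent_faces_closed(2) j1] assms jm by simp
  also have "\<dots> = psi d gm cp m j (d (Suc m) i \<alpha> x)"
    unfolding psi_def using dd[OF x, of "Suc j" i] assms jm by simp
  finally show ?thesis .
qed

lemma left_block_comp_psi:
  "cp (Suc m) j (cp (Suc m) (Suc j) (e m j (d (Suc m) j False x)) (gm m j True (d (Suc m) (Suc j) True x)))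
     (psi d gm cp (Suc m) j x) = psi_half"
proof -
  let ?l = "d (Suc m) j False x" and ?b = "d (Suc m) (Suc j) True x"
  let ?A = "e m j ?l" and ?B = "gm m j True ?b" and ?Q = "gm m j False ?b"
  have A: "?A \<in> G (Suc m)" using e_closed[OF adjacent_faces_closed(1) j1] jm by simp
  have "cp (Suc m) j (cp (Suc m) (Suc j) ?A ?B) (cp (Suc m) (Suc j) psi_half ?Q)
      = cp (Suc m) (Suc j) (cp (Suc m) j ?A psi_half) (cp (Suc m) j ?B ?Q)"
  proof (rule interchange[OF A gm_face_closed psi_half_closed gm_face_closed])
    show "d (Suc m) (Suc j) True ?A = d (Suc m) (Suc j) False ?B"
      using de_gt[OF adjacent_faces_closed(1) j1, of "Suc j" True]
        dg_opp2_minus[OF adjacent_faces_closed(2) j1 jm] dd_adjacent(1) jm by simp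
    show "d (Suc m) (Suc j) True psi_half = d (Suc m) (Suc j) False ?Q" by (rule psi_composable)
    show "d (Suc m) j True ?A = d (Suc m) j False psi_half"
      using de_eq[OF adjacent_faces_closed(1) j1] d_psi_half(1) jm by simp
    show "d (Suc m) j True ?B = d (Suc m) j False ?Q"
      using dg_same1[OF adjacent_faces_closed(2) j1 jm] by simp
  qed (use j1 jm in auto)
  also have "cp (Suc m) j ?A psi_half = psi_half"
    using cp_left_id[OF psi_half_closed j1] d_psi_half(1) jm by simp
  also have "cp (Suc m) j ?B ?Q = e m (Suc j) ?b"
    using conn_inv1[OF adjacent_faces_closed(2) j1 jm] .
  also have "cp (Suc m) (Suc j) psi_half (e m (Suc j) ?b) = psi_half"
    using cp_right_id[OF psi_half_closed, of "Suc j"] d_psi_half(4) jm by simp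
  finally show ?thesis unfolding psi_def by simp
qed

lemma psi_half_comp_right_block:
  "cp (Suc m) j psi_half (cp (Suc m) (Suc j) (gm m j False (d (Suc m) (Suc j) False x)) (e m j (d (Suc m) j True x)))
     = x"
proof -
  let ?r = "d (Suc m) j True x" and ?a = "d (Suc m) (Suc j) False x"
  let ?P = "gm m j True ?a" and ?Ga = "gm m j False ?a" and ?E = "e m j ?r"
  have E: "?E \<in> G (Suc m)" using e_closed[OF adjacent_faces_closed(1) j1] jm by simp
  have "cp (Suc m) j psi_half (cp (Suc m) (Suc j) ?Ga ?E)
      = cp (Suc m) (Suc j) (cp (Suc m) j ?P ?Ga) (cp (Suc m) j x ?E)"
  proof (rule interchange[OF gm_face_closed x gm_face_closed E])
    show "d (Suc m) (Suc j) True ?P = d (Suc m) (Suc j) False x" by (rule psi_half_composable)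
    show "d (Suc m) (Suc j) True ?Ga = d (Suc m) (Suc j) False ?E"
      using de_gt[OF adjacent_faces_closed(1) j1, of "Suc j" False]
        dg_opp2_plus[OF adjacent_faces_closed(2) j1 jm] dd_adjacent(2) jm by simp
    show "d (Suc m) j True ?P = d (Suc m) j False ?Ga"
      using dg_same1[OF adjacent_faces_closed(2) j1 jm] by simp
    show "d (Suc m) j True x = d (Suc m) j False ?E"
      using de_eq[OF adjacent_faces_closed(1) j1] jm by simp
  qed (use j1 jm in auto)
  also have "cp (Suc m) j ?P ?Ga = e m (Suc j) ?a"
    using conn_inv1[OF adjacent_faces_closed(2) j1 jm] .
  also have "cp (Suc m) j x ?E = x"
    using cp_right_id[OF x j1] jm by simp
  also have "cp (Suc m) (Suc j) (e m (Suc j) ?a) x = x"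
    using cp_left_id[OF x, of "Suc j"] jm by simp
  finally show ?thesis .
qed

end

lemma bd_psi:
  assumes x: "x \<in> G (Suc m)" and j1: "1 \<le> j" and jm: "j \<le> m"
  shows "bd d (Suc m) (psi d gm cp (Suc m) j x) = psi_sh d e gm cp (Suc m) j (bd d (Suc m) x)"
proof (rule shell_list_eqI[of _ "Suc m"])
  fix i \<alpha> assume i: "1 \<le> i" "i \<le> Suc m"
  have "sh (bd d (Suc m) x) k \<beta> = d (Suc m) k \<beta> x" if "k \<in> {i, j, Suc j}" for k \<beta>
    using that i j1 jm by (auto intro: sh_bd)
  then show "sh (bd d (Suc m) (psi d gm cp (Suc m) j x)) i \<alpha>
      = sh (psi_sh d e gm cp (Suc m) j (bd d (Suc m) x)) i \<alpha>"
    unfolding sh_bd[OF i] sh_psi_sh[OF i]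
    using i j1 jm d_psi_below[OF x j1 jm, of i \<alpha>] d_psi_above[OF x j1 jm, of i \<alpha>]
      d_psi_adjacent[OF x j1 jm]
    by (cases \<alpha>) (auto simp: not_less)
qed simp_all

lemma e_closed_pred: "c \<in> G (m - 1) \<Longrightarrow> 1 \<le> j \<Longrightarrow> j \<le> m \<Longrightarrow> e (m - 1) j c \<in> G m"
  using e_closed[of c "m - 1" j] by simp

lemma de_eq_pred: "c \<in> G (m - 1) \<Longrightarrow> 1 \<le> j \<Longrightarrow> j \<le> m \<Longrightarrow> d m j \<alpha> (e (m - 1) j c) = c"
  using de_eq[of c "m - 1" j] by simp

text \<open>The inverse of \<psi>_j relative to the boundary: l, r, a, b stand for the faces
  \<partial>^-_j, \<partial>^+_j, \<partial>^-_{j+1}, \<partial>^+_{j+1} of the cube to be recovered from y.\<close>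
definition psi_inverse :: "nat \<Rightarrow> nat \<Rightarrow> 'a \<Rightarrow> 'a \<Rightarrow> 'a \<Rightarrow> 'a \<Rightarrow> 'a \<Rightarrow> 'a" where
  "psi_inverse n j l r a b y =
     cp n j (cp n j (cp n (Suc j) (e (n - 1) j l) (gm (n - 1) j True b)) y)
            (cp n (Suc j) (gm (n - 1) j False a) (e (n - 1) j r))"

lemma psi_inverse_psi:
  assumes x: "x \<in> G (Suc m)" and j1: "1 \<le> j" and jm: "j \<le> m"
  shows "psi_inverse (Suc m) j (d (Suc m) j False x) (d (Suc m) j True x)
           (d (Suc m) (Suc j) False x) (d (Suc m) (Suc j) True x) (psi d gm cp (Suc m) j x) = x"
  unfolding psi_inverse_def
  using left_block_comp_psi[OF x j1 jm] psi_half_comp_right_block[OF x j1 jm] by simp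

context
  fixes l r a b y m j
  assumes l: "l \<in> G m" and r: "r \<in> G m" and a: "a \<in> G m" and b: "b \<in> G m"
    and y: "y \<in> G (Suc m)" and j1: "1 \<le> j" and jm: "j \<le> m"
    and lb: "d m j True l = d m j False b"
    and ar: "d m j True a = d m j False r"
    and la: "d m j False l = d m j False a"
    and rb: "d m j True r = d m j True b"
    and y_j_minus: "d (Suc m) j False y = cp m j l b"
    and y_j_plus: "d (Suc m) j True y = cp m j a r"
    and y_Suc_j_minus: "d (Suc m) (Suc j) False y = e (m - 1) j (d m j False a)"
    and y_Suc_j_plus: "d (Suc m) (Suc j) True y = e (m - 1) j (d m j True b)"
begin

abbreviation "blockL \<equiv> cp (Suc m) (Suc j) (e m j l) (gm m j True b)"
abbreviation "blockR \<equiv> cp (Suc m) (Suc j) (gm m j False a) (e m j r)"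
abbreviation "middle \<equiv> cp (Suc m) j blockL y"

lemma e_l_closed: "e m j l \<in> G (Suc m)" using e_closed[OF l j1] jm by simp
lemma e_r_closed: "e m j r \<in> G (Suc m)" using e_closed[OF r j1] jm by simp
lemma gm_a_closed: "gm m j True a \<in> G (Suc m)" "gm m j False a \<in> G (Suc m)"
  using gm_closed[OF a j1 jm] by auto
lemma gm_b_closed: "gm m j True b \<in> G (Suc m)" "gm m j False b \<in> G (Suc m)"
  using gm_closed[OF b j1 jm] by auto

lemma blockL_composable: "d (Suc m) (Suc j) True (e m j l) = d (Suc m) (Suc j) False (gm m j True b)"
  using de_gt[OF l j1, of "Suc j" True] dg_opp2_minus[OF b j1 jm] lb jm by simp

lemma blockL_closed: "blockL \<in> G (Suc m)"
  by (rule cp_closed[OF e_l_closed gm_b_closed(1)]) (use jm blockL_composable in auto)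

lemma d_blockL:
  "d (Suc m) j False blockL = l"
  "d (Suc m) j True blockL = cp m j l b"
  "d (Suc m) (Suc j) False blockL = e (m - 1) j (d m j False l)"
  "d (Suc m) (Suc j) True blockL = b"
  using d_cp_lt[OF e_l_closed gm_b_closed(1) j1, of "Suc j"] d_cp_minus[OF e_l_closed gm_b_closed(1), of "Suc j"]
    d_cp_plus[OF e_l_closed gm_b_closed(1), of "Suc j"] de_gt[OF l j1, of "Suc j" False]
    jm blockL_composable de_eq[OF l j1] dg_opp1_minus[OF b j1 jm] dg_same1[OF b j1 jm]
    dg_same2[OF b j1 jm] cp_right_id[OF l j1 jm] lb
  by simp_all

lemma blockR_composable: "d (Suc m) (Suc j) True (gm m j False a) = d (Suc m) (Suc j) False (e m j r)"
  using de_gt[OF r j1, of "Suc j" False] dg_opp2_plus[OF a j1 jm] ar jm by simp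

lemma blockR_closed: "blockR \<in> G (Suc m)"
  by (rule cp_closed[OF gm_a_closed(2) e_r_closed]) (use jm blockR_composable in auto)

lemma d_blockR:
  "d (Suc m) j False blockR = cp m j a r"
  "d (Suc m) j True blockR = r"
  "d (Suc m) (Suc j) False blockR = a"
  "d (Suc m) (Suc j) True blockR = e (m - 1) j (d m j True r)"
  using d_cp_lt[OF gm_a_closed(2) e_r_closed j1, of "Suc j"] d_cp_minus[OF gm_a_closed(2) e_r_closed, of "Suc j"]
    d_cp_plus[OF gm_a_closed(2) e_r_closed, of "Suc j"] de_gt[OF r j1, of "Suc j" True]
    jm blockR_composable de_eq[OF r j1] dg_opp1_plus[OF a j1 jm] dg_same1[OF a j1 jm]
    dg_same2[OF a j1 jm] cp_left_id[OF r j1 jm] ar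
  by simp_all

lemma middle_composable: "d (Suc m) j True blockL = d (Suc m) j False y"
  using d_blockL(2) y_j_minus by simp

lemma middle_closed: "middle \<in> G (Suc m)"
  by (rule cp_closed[OF blockL_closed y j1]) (use jm middle_composable in auto)

lemma d_middle:
  "d (Suc m) j False middle = l"
  "d (Suc m) j True middle = cp m j a r"
  "d (Suc m) (Suc j) False middle = e (m - 1) j (d m j False a)"
  "d (Suc m) (Suc j) True middle = b"
proof -
  have "cp m j (e (m - 1) j c) (e (m - 1) j c) = e (m - 1) j c" if "c \<in> G (m - 1)" for c
    using cp_left_id[OF e_closed_pred[OF that j1 jm] j1 jm] de_eq_pred[OF that j1 jm] by simp
  then show "d (Suc m) (Suc j) False middle = e (m - 1) j (d m j False a)"
    using d_cp_gt[OF blockL_closed y j1, of "Suc j" False] jm middle_composable d_blockL(3)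
      y_Suc_j_minus la d_closed[OF a j1 jm] by simp
  show "d (Suc m) (Suc j) True middle = b"
    using d_cp_gt[OF blockL_closed y j1, of "Suc j" True] jm middle_composable d_blockL(4)
      y_Suc_j_plus cp_right_id[OF b j1 jm] by simp
qed (use d_cp_minus[OF blockL_closed y j1] d_cp_plus[OF blockL_closed y j1] jm middle_composable
    d_blockL(1) y_j_plus in simp_all)

lemma psi_inverse_composable: "d (Suc m) j True middle = d (Suc m) j False blockR"
  using d_middle(2) d_blockR(1) by simp

lemma psi_inverse_eq: "psi_inverse (Suc m) j l r a b y = cp (Suc m) j middle blockR"
  by (simp add: psi_inverse_def)

lemma psi_inverse_closed: "psi_inverse (Suc m) j l r a b y \<in> G (Suc m)"
  unfolding psi_inverse_eq
  by (rule cp_closed[OF middle_closed blockR_closed j1]) (use jm psi_inverse_composable in auto)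

lemma d_psi_inverse_adjacent:
  "d (Suc m) j False (psi_inverse (Suc m) j l r a b y) = l"
  "d (Suc m) j True (psi_inverse (Suc m) j l r a b y) = r"
  "d (Suc m) (Suc j) False (psi_inverse (Suc m) j l r a b y) = a"
  "d (Suc m) (Suc j) True (psi_inverse (Suc m) j l r a b y) = b"
  unfolding psi_inverse_eq
  using d_cp_minus[OF middle_closed blockR_closed j1] d_cp_plus[OF middle_closed blockR_closed j1]
    d_cp_gt[OF middle_closed blockR_closed j1, of "Suc j"] jm psi_inverse_composable
    d_middle d_blockR cp_left_id[OF a j1 jm] cp_right_id[OF b j1 jm] rb
  by simp_all

lemma gm_comp_blockR: "cp (Suc m) (Suc j) (gm m j True a) blockR = e m j (cp m j a r)"
proof -
  have "cp (Suc m) (Suc j) (gm m j True a) blockR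
      = cp (Suc m) (Suc j) (cp (Suc m) (Suc j) (gm m j True a) (gm m j False a)) (e m j r)"
    by (rule cp_assoc[OF gm_a_closed e_r_closed, symmetric])
      (use jm blockR_composable dg_same2[OF a j1 jm] in auto)
  also have "\<dots> = cp (Suc m) (Suc j) (e m j a) (e m j r)"
    using conn_inv2[OF a j1 jm] by simp
  also have "\<dots> = e m j (cp m j a r)"
    using e_cp_le[OF a r j1 _ jm ar] by simp
  finally show ?thesis .
qed

lemma blockL_comp_gm: "cp (Suc m) (Suc j) blockL (gm m j False b) = e m j (cp m j l b)"
proof -
  have "cp (Suc m) (Suc j) blockL (gm m j False b)
      = cp (Suc m) (Suc j) (e m j l) (cp (Suc m) (Suc j) (gm m j True b) (gm m j False b))"
    by (rule cp_assoc[OF e_l_closed gm_b_closed]) (use jm blockL_composable dg_same2[OF b j1 jm] in auto)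
  also have "\<dots> = cp (Suc m) (Suc j) (e m j l) (e m j b)"
    using conn_inv2[OF b j1 jm] by simp
  also have "\<dots> = e m j (cp m j l b)"
    using e_cp_le[OF l b j1 _ jm lb] by simp
  finally show ?thesis .
qed

lemma gm_comp_psi_inverse:
  "cp (Suc m) (Suc j) (gm m j True a) (psi_inverse (Suc m) j l r a b y) = middle"
proof -
  let ?c = "d m j False a"
  let ?I = "e m j (e (m - 1) j ?c)"
  have c: "?c \<in> G (m - 1)" using d_closed[OF a j1 jm] .
  have I: "?I \<in> G (Suc m)" using e_closed[OF e_closed_pred[OF c j1 jm] j1] jm by simp
  have "cp (Suc m) j ?I (gm m j True a) = gm m j True a"
    using cp_left_id[OF gm_a_closed(1) j1] jm dg_opp1_minus[OF a j1 jm] by simp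
  then have "cp (Suc m) (Suc j) (gm m j True a) (psi_inverse (Suc m) j l r a b y)
      = cp (Suc m) (Suc j) (cp (Suc m) j ?I (gm m j True a)) (cp (Suc m) j middle blockR)"
    unfolding psi_inverse_eq by simp
  also have "\<dots> = cp (Suc m) j (cp (Suc m) (Suc j) ?I middle) (cp (Suc m) (Suc j) (gm m j True a) blockR)"
  proof (rule interchange[OF I gm_a_closed(1) middle_closed blockR_closed j1 _ _ _ _ _ psi_inverse_composable])
    show "d (Suc m) j True ?I = d (Suc m) j False (gm m j True a)"
      using de_eq[OF e_closed_pred[OF c j1 jm], of j True] dg_opp1_minus[OF a j1 jm] j1 jm by simp
    show "d (Suc m) (Suc j) True ?I = d (Suc m) (Suc j) False middle"
      using de_gt[OF e_closed_pred[OF c j1 jm] j1, of "Suc j" True] de_eq_pred[OF c j1 jm] d_middle(3) jm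
      by simp
    show "d (Suc m) (Suc j) True (gm m j True a) = d (Suc m) (Suc j) False blockR"
      using dg_same2[OF a j1 jm] d_blockR(3) by simp
  qed (use jm in auto)
  also have "cp (Suc m) (Suc j) ?I middle = middle"
  proof -
    have "?I = e m (Suc j) (e (m - 1) j ?c)" using ee[OF c j1, of j] j1 jm by (cases m) simp_all
    then show ?thesis using cp_left_id[OF middle_closed, of "Suc j"] jm d_middle(3) by simp
  qed
  also have "cp (Suc m) (Suc j) (gm m j True a) blockR = e m j (cp m j a r)"
    by (rule gm_comp_blockR)
  also have "cp (Suc m) j middle (e m j (cp m j a r)) = middle"
    using cp_right_id[OF middle_closed j1] jm d_middle(2) by simp
  finally show ?thesis .
qed

lemma psi_psi_inverse: "psi d gm cp (Suc m) j (psi_inverse (Suc m) j l r a b y) = y"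
proof -
  let ?c = "d m j True b"
  let ?I = "e m j (e (m - 1) j ?c)"
  have c: "?c \<in> G (m - 1)" using d_closed[OF b j1 jm] .
  have I: "?I \<in> G (Suc m)" using e_closed[OF e_closed_pred[OF c j1 jm] j1] jm by simp
  have "cp (Suc m) j (gm m j False b) ?I = gm m j False b"
    using cp_right_id[OF gm_b_closed(2) j1] jm dg_opp1_plus[OF b j1 jm] by simp
  then have "psi d gm cp (Suc m) j (psi_inverse (Suc m) j l r a b y)
      = cp (Suc m) (Suc j) (cp (Suc m) j blockL y) (cp (Suc m) j (gm m j False b) ?I)"
    unfolding psi_def using d_psi_inverse_adjacent(3,4) gm_comp_psi_inverse by simp
  also have "\<dots> = cp (Suc m) j (cp (Suc m) (Suc j) blockL (gm m j False b)) (cp (Suc m) (Suc j) y ?I)"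
  proof (rule interchange[OF blockL_closed y gm_b_closed(2) I j1 _ _ _ _ middle_composable])
    show "d (Suc m) j True (gm m j False b) = d (Suc m) j False ?I"
      using de_eq[OF e_closed_pred[OF c j1 jm], of j False] dg_opp1_plus[OF b j1 jm] j1 jm by simp
    show "d (Suc m) (Suc j) True blockL = d (Suc m) (Suc j) False (gm m j False b)"
      using dg_same2[OF b j1 jm] d_blockL(4) by simp
    show "d (Suc m) (Suc j) True y = d (Suc m) (Suc j) False ?I"
      using de_gt[OF e_closed_pred[OF c j1 jm] j1, of "Suc j" False] de_eq_pred[OF c j1 jm] y_Suc_j_plus jm
      by simp
  qed (use jm in auto)
  also have "cp (Suc m) (Suc j) y ?I = y"
  proof -
    have "?I = e m (Suc j) (e (m - 1) j ?c)" using ee[OF c j1, of j] j1 jm by (cases m) simp_all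
    then show ?thesis using cp_right_id[OF y, of "Suc j"] jm y_Suc_j_plus by simp
  qed
  also have "cp (Suc m) (Suc j) blockL (gm m j False b) = e m j (cp m j l b)"
    by (rule blockL_comp_gm)
  also have "cp (Suc m) j (e m j (cp m j l b)) y = y"
    using cp_left_id[OF y j1] jm y_j_minus by simp
  finally show ?thesis .
qed

lemma d_psi_inverse_below:
  assumes i1: "1 \<le> i" and ij: "i < j"
  shows "d (Suc m) i \<alpha> (psi_inverse (Suc m) j l r a b y) =
    psi_inverse m (j - 1) (d m i \<alpha> l) (d m i \<alpha> r) (d m i \<alpha> a) (d m i \<alpha> b) (d (Suc m) i \<alpha> y)"
proof -
  have "Suc (j - 1) = j" using ij by simp
  then show ?thesis
    unfolding psi_inverse_eq psi_inverse_def
    using d_cp_lt[OF middle_closed blockR_closed i1 ij, of \<alpha>] d_cp_lt[OF blockL_closed y i1 ij, of \<alpha>]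
      d_cp_lt[OF e_l_closed gm_b_closed(1) i1, of "Suc j" \<alpha>] d_cp_lt[OF gm_a_closed(2) e_r_closed i1, of "Suc j" \<alpha>]
      de_lt[OF l i1 ij, of \<alpha>] de_lt[OF r i1 ij, of \<alpha>]
      dg_lt[OF b i1 ij jm, of \<alpha> True] dg_lt[OF a i1 ij jm, of \<alpha> False]
      jm ij psi_inverse_composable middle_composable blockL_composable blockR_composable
    by simp
qed

lemma d_psi_inverse_above:
  assumes ij: "Suc j < i" and im: "i \<le> Suc m"
  shows "d (Suc m) i \<alpha> (psi_inverse (Suc m) j l r a b y) =
    psi_inverse m j (d m (i - 1) \<alpha> l) (d m (i - 1) \<alpha> r) (d m (i - 1) \<alpha> a) (d m (i - 1) \<alpha> b)
      (d (Suc m) i \<alpha> y)"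
proof -
  have ij': "j < i" using ij by simp
  show ?thesis
    unfolding psi_inverse_eq psi_inverse_def
    using d_cp_gt[OF middle_closed blockR_closed j1 ij' im, of \<alpha>] d_cp_gt[OF blockL_closed y j1 ij' im, of \<alpha>]
      d_cp_gt[OF e_l_closed gm_b_closed(1) _ ij im, of \<alpha>] d_cp_gt[OF gm_a_closed(2) e_r_closed _ ij im, of \<alpha>]
      de_gt[OF l j1 ij' im, of \<alpha>] de_gt[OF r j1 ij' im, of \<alpha>]
      dg_gt[OF b j1 ij im, of \<alpha> True] dg_gt[OF a j1 ij im, of \<alpha> False]
      jm psi_inverse_composable middle_composable blockL_composable blockR_composable
    by simp
qed

end

lemma shells_SucD:
  assumes "z \<in> shells G d (Suc m)"
  shows "length z = Suc m"
    and "\<And>i \<alpha>. 1 \<le> i \<Longrightarrow> i \<le> Suc m \<Longrightarrow> sh z i \<alpha> \<in> G m"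
    and "\<And>i k \<alpha> \<beta>. 1 \<le> i \<Longrightarrow> i < k \<Longrightarrow> k \<le> Suc m \<Longrightarrow>
           d m i \<alpha> (sh z k \<beta>) = d m (k - 1) \<beta> (sh z i \<alpha>)"
  using assms unfolding shells_def by auto

lemma bd_in_shells:
  assumes x: "x \<in> G n"
  shows "bd d n x \<in> shells G d n"
  unfolding shells_def
proof (intro CollectI conjI allI impI)
  show "length (bd d n x) = n" by simp
  fix i \<alpha> assume "1 \<le> i \<and> i \<le> n"
  then show "sh (bd d n x) i \<alpha> \<in> G (n - 1)"
    using sh_bd[of i n d x \<alpha>] d_closed[OF x] by simp
next
  fix i k \<alpha> \<beta> assume "1 \<le> i \<and> i < k \<and> k \<le> n"
  then show "d (n - 1) i \<alpha> (sh (bd d n x) k \<beta>) = d (n - 1) (k - 1) \<beta> (sh (bd d n x) i \<alpha>)"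
    using sh_bd[of i n d x \<alpha>] sh_bd[of k n d x \<beta>] dd[OF x] by simp
qed

lemma bd_psi_inj:
  assumes x: "x \<in> G (Suc m)" and x': "x' \<in> G (Suc m)" and j1: "1 \<le> j" and jm: "j \<le> m"
    and bd_eq: "bd d (Suc m) x = bd d (Suc m) x'"
    and psi_eq: "psi d gm cp (Suc m) j x = psi d gm cp (Suc m) j x'"
  shows "x = x'"
proof -
  have faces: "d (Suc m) i \<alpha> x = d (Suc m) i \<alpha> x'" if "1 \<le> i" "i \<le> Suc m" for i \<alpha>
    using sh_bd[OF that, of d x \<alpha>] sh_bd[OF that, of d x' \<alpha>] bd_eq by simp
  have "x = psi_inverse (Suc m) j (d (Suc m) j False x) (d (Suc m) j True x)
             (d (Suc m) (Suc j) False x) (d (Suc m) (Suc j) True x) (psi d gm cp (Suc m) j x)"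
    using psi_inverse_psi[OF x j1 jm] by simp
  also have "\<dots> = psi_inverse (Suc m) j (d (Suc m) j False x') (d (Suc m) j True x')
             (d (Suc m) (Suc j) False x') (d (Suc m) (Suc j) True x') (psi d gm cp (Suc m) j x')"
    using faces[of j] faces[of "Suc j"] psi_eq j1 jm by simp
  also have "\<dots> = x'"
    using psi_inverse_psi[OF x' j1 jm] by simp
  finally show ?thesis .
qed

context
  fixes z y m j
  assumes z: "z \<in> shells G d (Suc m)" and y: "y \<in> G (Suc m)" and j1: "1 \<le> j" and jm: "j \<le> m"
    and psi_sh_z: "psi_sh d e gm cp (Suc m) j z = bd d (Suc m) y"
begin

abbreviation "shell_lift \<equiv>
  psi_inverse (Suc m) j (sh z j False) (sh z j True) (sh z (Suc j) False) (sh z (Suc j) True) y"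

lemma d_y: "1 \<le> i \<Longrightarrow> i \<le> Suc m \<Longrightarrow> d (Suc m) i \<alpha> y = sh (psi_sh d e gm cp (Suc m) j z) i \<alpha>"
  using sh_bd[of _ "Suc m" d y] psi_sh_z by simp

text \<open>The hypotheses of the context of psi_inverse above, for the faces of z.\<close>
lemma shell_lift_hyps:
  "sh z j False \<in> G m" "sh z j True \<in> G m" "sh z (Suc j) False \<in> G m" "sh z (Suc j) True \<in> G m"
  "y \<in> G (Suc m)" "1 \<le> j" "j \<le> m"
  "d m j True (sh z j False) = d m j False (sh z (Suc j) True)"
  "d m j True (sh z (Suc j) False) = d m j False (sh z j True)"
  "d m j False (sh z j False) = d m j False (sh z (Suc j) False)"
  "d m j True (sh z j True) = d m j True (sh z (Suc j) True)"
  "d (Suc m) j False y = cp m j (sh z j False) (sh z (Suc j) True)"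
  "d (Suc m) j True y = cp m j (sh z (Suc j) False) (sh z j True)"
  "d (Suc m) (Suc j) False y = e (m - 1) j (d m j False (sh z (Suc j) False))"
  "d (Suc m) (Suc j) True y = e (m - 1) j (d m j True (sh z (Suc j) True))"
  using shells_SucD(2)[OF z] y j1 jm shells_SucD(3)[OF z, of j "Suc j"]
    d_y[of j] d_y[of "Suc j"] sh_psi_sh[of j "Suc m" d e gm cp j z] sh_psi_sh[of "Suc j" "Suc m" d e gm cp j z]
  by simp_all

lemma bd_shell_lift: "bd d (Suc m) shell_lift = z"
proof (rule shell_list_eqI[of _ "Suc m"])
  fix i \<alpha> assume i: "1 \<le> i" "i \<le> Suc m"
  let ?w = "sh z i \<alpha>"
  consider "i < j" | "i = j" | "i = Suc j" | "Suc j < i" by linarith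
  then have "d (Suc m) i \<alpha> shell_lift = ?w"
  proof cases
    case 1
    have w: "?w \<in> G (Suc (m - 1))" using shells_SucD(2)[OF z i] 1 jm by simp
    have "d (Suc m) i \<alpha> shell_lift = psi_inverse m (j - 1) (d m (j - 1) False ?w) (d m (j - 1) True ?w)
        (d m j False ?w) (d m j True ?w) (psi d gm cp m (j - 1) ?w)"
      using d_psi_inverse_below[OF shell_lift_hyps i(1) 1, of \<alpha>] shells_SucD(3)[OF z, of i j \<alpha>]
        shells_SucD(3)[OF z, of i "Suc j" \<alpha>] d_y[OF i, of \<alpha>] sh_psi_sh[OF i, of d e gm cp j z] i 1 jm
      by simp
    also have "\<dots> = ?w" using psi_inverse_psi[OF w, of "j - 1"] 1 i jm by simp
    finally show ?thesis .
  next
    case 2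
    then show ?thesis using d_psi_inverse_adjacent(1,2)[OF shell_lift_hyps] by (cases \<alpha>) auto
  next
    case 3
    then show ?thesis using d_psi_inverse_adjacent(3,4)[OF shell_lift_hyps] by (cases \<alpha>) auto
  next
    case 4
    have w: "?w \<in> G (Suc (m - 1))" using shells_SucD(2)[OF z i] 4 i jm by simp
    have "d (Suc m) i \<alpha> shell_lift = psi_inverse m j (d m j False ?w) (d m j True ?w)
        (d m (Suc j) False ?w) (d m (Suc j) True ?w) (psi d gm cp m j ?w)"
      using d_psi_inverse_above[OF shell_lift_hyps 4 i(2), of \<alpha>] shells_SucD(3)[OF z, of j i _ \<alpha>]
        shells_SucD(3)[OF z, of "Suc j" i _ \<alpha>] d_y[OF i, of \<alpha>] sh_psi_sh[OF i, of d e gm cp j z] i 4 j1 jm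
      by simp
    also have "\<dots> = ?w" using psi_inverse_psi[OF w, of j] 4 i j1 by simp
    finally show ?thesis .
  qed
  then show "sh (bd d (Suc m) shell_lift) i \<alpha> = sh z i \<alpha>" using sh_bd[OF i, of d] by simp
qed (use shells_SucD(1)[OF z] in simp_all)

lemma psi_lift: "\<exists>x\<in>G (Suc m). bd d (Suc m) x = z \<and> psi d gm cp (Suc m) j x = y"
  using psi_inverse_closed[OF shell_lift_hyps] bd_shell_lift psi_psi_inverse[OF shell_lift_hyps] by blast

end

context
  fixes z p j
  assumes z: "z \<in> shells G d (Suc (Suc p))" and j1: "1 \<le> j" and jm: "j \<le> Suc p"
begin

abbreviation "psi_z \<equiv> sh (psi_sh d e gm cp (Suc (Suc p)) j z)"

lemma adjacent_shell_faces_closed: "sh z j \<alpha> \<in> G (Suc p)" "sh z (Suc j) \<alpha> \<in> G (Suc p)"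
  using shells_SucD(2)[OF z] j1 jm by auto

lemma adjacent_shell_faces_composable:
  "d (Suc p) j True (sh z j False) = d (Suc p) j False (sh z (Suc j) True)"
  "d (Suc p) j True (sh z (Suc j) False) = d (Suc p) j False (sh z j True)"
  using shells_SucD(3)[OF z, of j "Suc j"] j1 jm by simp_all

lemma psi_z_below: "1 \<le> i \<Longrightarrow> i < j \<Longrightarrow> psi_z i \<alpha> = psi d gm cp (Suc p) (j - 1) (sh z i \<alpha>)"
  using sh_psi_sh[of i "Suc (Suc p)" d e gm cp j z \<alpha>] jm by simp

lemma psi_z_adjacent:
  "psi_z j False = cp (Suc p) j (sh z j False) (sh z (Suc j) True)"
  "psi_z j True = cp (Suc p) j (sh z (Suc j) False) (sh z j True)"
  "psi_z (Suc j) \<alpha> = e p j (d (Suc p) j \<alpha> (sh z (Suc j) \<alpha>))"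
  using sh_psi_sh[of j "Suc (Suc p)" d e gm cp j z] sh_psi_sh[of "Suc j" "Suc (Suc p)" d e gm cp j z]
    j1 jm by simp_all

lemma psi_z_above: "Suc j < i \<Longrightarrow> i \<le> Suc (Suc p) \<Longrightarrow> psi_z i \<alpha> = psi d gm cp (Suc p) j (sh z i \<alpha>)"
  using sh_psi_sh[of i "Suc (Suc p)" d e gm cp j z \<alpha>] by simp

lemma psi_z_closed:
  assumes i: "1 \<le> i" "i \<le> Suc (Suc p)"
  shows "psi_z i \<alpha> \<in> G (Suc p)"
proof -
  note Z = shells_SucD(2)[OF z i, of \<alpha>] adjacent_shell_faces_closed
  consider "i < j" | "i = j" | "i = Suc j" | "Suc j < i" by linarith
  then show ?thesis
  proof cases
    case 1
    then show ?thesis using psi_z_below[OF i(1) 1] psi_closed[OF Z(1), of "j - 1"] i jm by simp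
  next
    case 2
    then show ?thesis
      using psi_z_adjacent(1,2) cp_closed[OF Z(2) Z(3) j1 jm adjacent_shell_faces_composable(1)]
        cp_closed[OF Z(3) Z(2) j1 jm adjacent_shell_faces_composable(2)]
      by (cases \<alpha>) auto
  next
    case 3
    then show ?thesis using psi_z_adjacent(3) e_closed[OF d_closed[OF Z(3) j1 jm] j1] jm by simp
  next
    case 4
    then show ?thesis using psi_z_above[OF 4 i(2)] psi_closed[OF Z(1), of j] j1 i by simp
  qed
qed

lemma psi_z_compatible_away:
  assumes ik: "1 \<le> i" "i < k" "k \<le> Suc (Suc p)"
    and away: "k < j \<or> (i < j \<and> Suc j < k) \<or> Suc j < i"
  shows "d (Suc p) i \<alpha> (psi_z k \<beta>) = d (Suc p) (k - 1) \<beta> (psi_z i \<alpha>)"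
proof -
  have Zi: "sh z i \<alpha> \<in> G (Suc p)" and Zk: "sh z k \<beta> \<in> G (Suc p)"
    using shells_SucD(2)[OF z] ik by auto
  note Z = shells_SucD(3)[OF z ik]
  consider "k < j" | "i < j" "Suc j < k" | "Suc j < i" using away by blast
  then show ?thesis
  proof cases
    case 1
    then show ?thesis
      using psi_z_below[of i \<alpha>] psi_z_below[of k \<beta>] ik d_psi_below[OF Zk _ _, of "j - 1" i \<alpha>]
        d_psi_below[OF Zi _ _, of "j - 1" "k - 1" \<beta>] Z jm by simp
  next
    case 2
    then show ?thesis
      using psi_z_below[OF ik(1)] psi_z_above[OF 2(2) ik(3)] d_psi_below[OF Zk, of j i \<alpha>]
        d_psi_above[OF Zi, of "j - 1" "k - 1" \<beta>] Z ik j1 jm by simp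
  next
    case 3
    then show ?thesis
      using psi_z_above[of i \<alpha>] psi_z_above[of k \<beta>] ik d_psi_above[OF Zk j1, of i \<alpha>]
        d_psi_above[OF Zi j1, of "k - 1" \<beta>] Z by simp
  qed
qed

lemma psi_z_compatible_below_j:
  assumes i: "1 \<le> i" "i < j"
  shows "d (Suc p) i \<alpha> (psi_z j \<beta>) = d (Suc p) (j - 1) \<beta> (psi_z i \<alpha>)"
proof -
  note Zj = adjacent_shell_faces_closed and t = adjacent_shell_faces_composable
  have Zi: "sh z i \<alpha> \<in> G (Suc p)" using shells_SucD(2)[OF z] i jm by simp
  have a: "d (Suc p) i \<alpha> (sh z j \<gamma>) = d (Suc p) (j - 1) \<gamma> (sh z i \<alpha>)" for \<gamma>
    using shells_SucD(3)[OF z, of i j] i jm by simp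
  have b: "d (Suc p) i \<alpha> (sh z (Suc j) \<gamma>) = d (Suc p) j \<gamma> (sh z i \<alpha>)" for \<gamma>
    using shells_SucD(3)[OF z, of i "Suc j"] i jm by simp
  have jj: "Suc (j - 1) = j" using i by simp
  show ?thesis
  proof (cases \<beta>)
    case True
    then show ?thesis
      using psi_z_adjacent(2) psi_z_below[OF i] d_cp_lt[OF Zj(2) Zj(1) i jm t(2), of \<alpha>] a b
        d_psi_adjacent(2)[OF Zi, of "j - 1"] i jm jj by simp
  next
    case False
    then show ?thesis
      using psi_z_adjacent(1) psi_z_below[OF i] d_cp_lt[OF Zj(1) Zj(2) i jm t(1), of \<alpha>] a b
        d_psi_adjacent(1)[OF Zi, of "j - 1"] i jm jj by simp
  qed
qed

lemma psi_z_compatible_below_Suc_j: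
  assumes i: "1 \<le> i" "i < j"
  shows "d (Suc p) i \<alpha> (psi_z (Suc j) \<beta>) = d (Suc p) j \<beta> (psi_z i \<alpha>)"
proof -
  have Zi: "sh z i \<alpha> \<in> G (Suc p)" using shells_SucD(2)[OF z] i jm by simp
  note Zj = adjacent_shell_faces_closed(2)[of \<beta>]
  have jj: "Suc (j - 1) = j" using i by simp
  have "d (Suc p) i \<alpha> (psi_z (Suc j) \<beta>) = e (p - 1) (j - 1) (d p i \<alpha> (d (Suc p) j \<beta> (sh z (Suc j) \<beta>)))"
    using psi_z_adjacent(3) de_lt[OF d_closed[OF Zj j1 jm] i(1), of j] i jm by simp
  also have "\<dots> = e (p - 1) (j - 1) (d p (j - 1) \<beta> (d (Suc p) j \<beta> (sh z i \<alpha>)))"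
    using dd[OF Zj i(1), of j \<alpha> \<beta>] shells_SucD(3)[OF z, of i "Suc j" \<alpha> \<beta>] i jm by simp
  also have "\<dots> = d (Suc p) j \<beta> (psi_z i \<alpha>)"
    using psi_z_below[OF i] d_psi_adjacent(3,4)[OF Zi, of "j - 1"] jj jm i
    by (cases \<beta>) simp_all
  finally show ?thesis .
qed

lemma psi_z_compatible_j_Suc_j: "d (Suc p) j \<alpha> (psi_z (Suc j) \<beta>) = d (Suc p) j \<beta> (psi_z j \<alpha>)"
proof -
  note Zj = adjacent_shell_faces_closed and t = adjacent_shell_faces_composable
  have "d (Suc p) j \<alpha> (psi_z (Suc j) \<beta>) = d (Suc p) j \<beta> (sh z (Suc j) \<beta>)"
    using psi_z_adjacent(3) de_eq[OF d_closed[OF Zj(2) j1 jm] j1] jm by simp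
  then show ?thesis
    using psi_z_adjacent(1,2) shells_SucD(3)[OF z, of j "Suc j"] j1 jm
      d_cp_minus[OF Zj(1) Zj(2) j1 jm t(1)] d_cp_plus[OF Zj(1) Zj(2) j1 jm t(1)]
      d_cp_minus[OF Zj(2) Zj(1) j1 jm t(2)] d_cp_plus[OF Zj(2) Zj(1) j1 jm t(2)]
    by (cases \<alpha>; cases \<beta>) simp_all
qed

lemma psi_z_compatible_j_above:
  assumes k: "Suc j < k" "k \<le> Suc (Suc p)"
  shows "d (Suc p) j \<alpha> (psi_z k \<beta>) = d (Suc p) (k - 1) \<beta> (psi_z j \<alpha>)"
proof -
  note Zj = adjacent_shell_faces_closed and t = adjacent_shell_faces_composable
  have Zk: "sh z k \<beta> \<in> G (Suc p)" using shells_SucD(2)[OF z] k by simp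
  have jk: "j < k - 1" "k - 1 \<le> Suc p" and jp: "j \<le> p" using k by auto
  have a: "d (Suc p) j \<gamma> (sh z k \<beta>) = d (Suc p) (k - 1) \<beta> (sh z j \<gamma>)" for \<gamma>
    using shells_SucD(3)[OF z, of j k] k j1 by simp
  have b: "d (Suc p) (Suc j) \<gamma> (sh z k \<beta>) = d (Suc p) (k - 1) \<beta> (sh z (Suc j) \<gamma>)" for \<gamma>
    using shells_SucD(3)[OF z, of "Suc j" k] k by simp
  show ?thesis
  proof (cases \<alpha>)
    case True
    then show ?thesis
      using psi_z_adjacent(2) psi_z_above[OF k] d_psi_adjacent(2)[OF Zk j1 jp] a b
        d_cp_gt[OF Zj(2) Zj(1) j1 jk t(2), of \<beta>] by simp
  next
    case False
    then show ?thesis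
      using psi_z_adjacent(1) psi_z_above[OF k] d_psi_adjacent(1)[OF Zk j1 jp] a b
        d_cp_gt[OF Zj(1) Zj(2) j1 jk t(1), of \<beta>] by simp
  qed
qed

lemma psi_z_compatible_Suc_j_above:
  assumes k: "Suc j < k" "k \<le> Suc (Suc p)"
  shows "d (Suc p) (Suc j) \<alpha> (psi_z k \<beta>) = d (Suc p) (k - 1) \<beta> (psi_z (Suc j) \<alpha>)"
proof -
  note Zj = adjacent_shell_faces_closed(2)[of \<alpha>]
  have Zk: "sh z k \<beta> \<in> G (Suc p)" using shells_SucD(2)[OF z] k by simp
  have jk: "j < k - 1" "k - 1 \<le> Suc p" and jp: "j \<le> p" using k by auto
  have "d (Suc p) (k - 1) \<beta> (psi_z (Suc j) \<alpha>) = e (p - 1) j (d p (k - 2) \<beta> (d (Suc p) j \<alpha> (sh z (Suc j) \<alpha>)))"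
    using psi_z_adjacent(3) de_gt[OF d_closed[OF Zj j1 jm] j1 jk(1), of \<beta>] jk by (simp add: numeral_2_eq_2)
  also have "\<dots> = e (p - 1) j (d p j \<alpha> (d (Suc p) (Suc j) \<alpha> (sh z k \<beta>)))"
    using dd[OF Zj j1 jk, of \<alpha> \<beta>] shells_SucD(3)[OF z, of "Suc j" k \<alpha> \<beta>] k jk
    by (simp add: numeral_2_eq_2)
  also have "\<dots> = d (Suc p) (Suc j) \<alpha> (psi_z k \<beta>)"
    using psi_z_above[OF k] d_psi_adjacent(3,4)[OF Zk j1 jp] by (cases \<alpha>) simp_all
  finally show ?thesis by simp
qed

lemma psi_z_compatible:
  assumes ik: "1 \<le> i" "i < k" "k \<le> Suc (Suc p)"
  shows "d (Suc p) i \<alpha> (psi_z k \<beta>) = d (Suc p) (k - 1) \<beta> (psi_z i \<alpha>)"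
proof -
  consider "k < j \<or> (i < j \<and> Suc j < k) \<or> Suc j < i" | "i < j" "k = j" | "i < j" "k = Suc j"
    | "i = j" "k = Suc j" | "i = j" "Suc j < k" | "i = Suc j" "Suc j < k"
    using ik by linarith
  then show ?thesis
  proof cases
    case 1
    then show ?thesis using psi_z_compatible_away[OF ik] by blast
  qed (use psi_z_compatible_below_j psi_z_compatible_below_Suc_j psi_z_compatible_j_Suc_j psi_z_compatible_j_above
      psi_z_compatible_Suc_j_above ik in simp_all)
qed

end

lemma psi_sh_in_shells:
  assumes "z \<in> shells G d (Suc m)" and "1 \<le> j" and "j \<le> m"
  shows "psi_sh d e gm cp (Suc m) j z \<in> shells G d (Suc m)"
proof -
  obtain p where m: "m = Suc p" using assms(2,3) by (cases m) auto
  show ?thesis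
    using psi_z_closed[OF assms(1,2)[unfolded m] assms(3)[unfolded m]]
      psi_z_compatible[OF assms(1,2)[unfolded m] assms(3)[unfolded m]]
    unfolding shells_def m by simp
qed

lemma fold_psi_closed:
  "x \<in> G (Suc m) \<Longrightarrow> set ks \<subseteq> {1..m} \<Longrightarrow> fold (psi d gm cp (Suc m)) ks x \<in> G (Suc m)"
  by (induction ks arbitrary: x) (simp_all add: psi_closed)

lemma bd_fold_psi:
  "x \<in> G (Suc m) \<Longrightarrow> set ks \<subseteq> {1..m} \<Longrightarrow>
    bd d (Suc m) (fold (psi d gm cp (Suc m)) ks x) = fold (psi_sh d e gm cp (Suc m)) ks (bd d (Suc m) x)"
  by (induction ks arbitrary: x) (simp_all add: bd_psi psi_closed)

lemma fold_psi_inj: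
  "x \<in> G (Suc m) \<Longrightarrow> x' \<in> G (Suc m) \<Longrightarrow> set ks \<subseteq> {1..m} \<Longrightarrow>
    bd d (Suc m) x = bd d (Suc m) x' \<Longrightarrow>
    fold (psi d gm cp (Suc m)) ks x = fold (psi d gm cp (Suc m)) ks x' \<Longrightarrow> x = x'"
proof (induction ks arbitrary: x x')
  case (Cons k ks)
  then have k: "1 \<le> k" "k \<le> m" by auto
  have "bd d (Suc m) (psi d gm cp (Suc m) k x) = bd d (Suc m) (psi d gm cp (Suc m) k x')"
    using bd_psi[OF Cons.prems(1) k] bd_psi[OF Cons.prems(2) k] Cons.prems(4) by simp
  then have "psi d gm cp (Suc m) k x = psi d gm cp (Suc m) k x'"
    using Cons.IH[OF psi_closed[OF Cons.prems(1) k] psi_closed[OF Cons.prems(2) k]] Cons.prems by simp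
  then show ?case using bd_psi_inj[OF Cons.prems(1,2) k Cons.prems(4)] by simp
qed simp

lemma fold_psi_lift:
  "z \<in> shells G d (Suc m) \<Longrightarrow> y \<in> G (Suc m) \<Longrightarrow> set ks \<subseteq> {1..m} \<Longrightarrow>
    fold (psi_sh d e gm cp (Suc m)) ks z = bd d (Suc m) y \<Longrightarrow>
    \<exists>x\<in>G (Suc m). bd d (Suc m) x = z \<and> fold (psi d gm cp (Suc m)) ks x = y"
proof (induction ks arbitrary: z)
  case (Cons k ks)
  then have k: "1 \<le> k" "k \<le> m" by auto
  obtain x' where x': "x' \<in> G (Suc m)" "bd d (Suc m) x' = psi_sh d e gm cp (Suc m) k z"
      "fold (psi d gm cp (Suc m)) ks x' = y"
    using Cons.IH[OF psi_sh_in_shells[OF Cons.prems(1) k] Cons.prems(2)] Cons.prems(3,4) by auto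
  obtain x where "x \<in> G (Suc m)" "bd d (Suc m) x = z" "psi d gm cp (Suc m) k x = x'"
    using psi_lift[OF Cons.prems(1) x'(1) k x'(2)[symmetric]] by blast
  then show ?case using x'(3) by auto
qed auto

lemma bij_betw_bd_Phi:
  "bij_betw (\<lambda>x. (bd d (Suc m) x, Phi d gm cp (Suc m) x)) (G (Suc m))
     {(z, y). z \<in> shells G d (Suc m) \<and> y \<in> Phi d gm cp (Suc m) ` G (Suc m) \<and>
              Phi_sh d e gm cp (Suc m) z = bd d (Suc m) y}"
  (is "bij_betw ?f _ ?pairs")
proof (rule bij_betw_imageI)
  note ks = set_Phi_word[of m]
  have Phi: "Phi d gm cp (Suc m) = fold (psi d gm cp (Suc m)) (Phi_word (Suc m))"
    and Phi_sh: "Phi_sh d e gm cp (Suc m) = fold (psi_sh d e gm cp (Suc m)) (Phi_word (Suc m))"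
    unfolding Phi_def Phi_sh_def Phi_gen_eq_fold by simp_all
  show "inj_on ?f (G (Suc m))"
    unfolding inj_on_def Phi using fold_psi_inj[OF _ _ ks] by blast
  show "?f ` G (Suc m) = ?pairs"
  proof (intro equalityI subsetI)
    fix p assume "p \<in> ?f ` G (Suc m)"
    then obtain x where "x \<in> G (Suc m)" "p = ?f x" by blast
    then show "p \<in> ?pairs"
      using bd_in_shells bd_fold_psi[OF _ ks] unfolding Phi Phi_sh by simp
  next
    fix p assume "p \<in> ?pairs"
    then obtain z y where p: "p = (z, y)" and z: "z \<in> shells G d (Suc m)"
      and y: "y \<in> Phi d gm cp (Suc m) ` G (Suc m)" and zy: "Phi_sh d e gm cp (Suc m) z = bd d (Suc m) y"
      by blast
    have "y \<in> G (Suc m)" using y fold_psi_closed[OF _ ks] unfolding Phi by blast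
    then obtain x where "x \<in> G (Suc m)" "bd d (Suc m) x = z" "Phi d gm cp (Suc m) x = y"
      using fold_psi_lift[OF z _ ks] zy unfolding Phi Phi_sh by blast
    then show "p \<in> ?f ` G (Suc m)" using p by blast
  qed
qed

end

theorem theorem8p5:
  fixes G :: "nat \<Rightarrow> 'a set"
    and d :: "nat \<Rightarrow> nat \<Rightarrow> bool \<Rightarrow> 'a \<Rightarrow> 'a"
    and e :: "nat \<Rightarrow> nat \<Rightarrow> 'a \<Rightarrow> 'a"
    and gm :: "nat \<Rightarrow> nat \<Rightarrow> bool \<Rightarrow> 'a \<Rightarrow> 'a"
    and cp :: "nat \<Rightarrow> nat \<Rightarrow> 'a \<Rightarrow> 'a \<Rightarrow> 'a"
    and n :: nat
  assumes "cubical_conn G d e gm cp"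
    and "1 \<le> n"
  shows "bij_betw (\<lambda>x. (bd d n x, Phi d gm cp n x)) (G n)
           {(z, y). z \<in> shells G d n \<and> y \<in> Phi d gm cp n ` G n \<and>
                    Phi_sh d e gm cp n z = bd d n y}"
proof -
  obtain m where "n = Suc m" using assms(2) by (cases n) auto
  then show ?thesis using cubical_conn.bij_betw_bd_Phi[OF assms(1)] by simp
qed

end
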